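(* Let $(g_\alpha)_{\alpha<\omega_1}\subset\mathcal{I}$. Then there exists $(f_\alpha)_{\alpha<\omega_1}\subset\mathcal{I}$ such that (1) $f_\alpha(n)\le g_\alpha(n)$ for all $\alpha<\omega_1$ and $n\in\mathbb{N}$, and (2) $j(f_\beta)\subset^a j(f_\alpha)$ for all $\alpha<\beta<\omega_1$.
   Context: $\mathcal{I}$ is the class of all non-decreasing maps $f:\mathbb{N}\to\mathbb{N}\cup\{0\}$ with $f(1)=0$, $\lim_{n\to\infty}f(n)=\infty$, and $f(n+1)\le f(n)+1$ for all $n$. The map $j:\mathcal{I}\to[\mathbb{N}]^\omega$ (infinite subsets of $\mathbb{N}$) is $j(f)=\{n\in\mathbb{N}:f(n+1)>f(n)\}$. For infinite $A,B\subset\mathbb{N}$, $A\subset^a B$ means $A\setminus B$ is finite. *)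

theory Defs
  imports Main "HOL-Library.Countable_Set"
begin

text \<open>Positive naturals are represented by n \<ge> 1; values of a function at 0 are irrelevant.\<close>

definition classI :: "(nat \<Rightarrow> nat) set" where
  "classI = {f. (\<forall>n\<ge>1. f n \<le> f (Suc n)) \<and> f 1 = 0 \<and> filterlim f at_top sequentially
                \<and> (\<forall>n\<ge>1. f (Suc n) \<le> f n + 1)}"

definition jmap :: "(nat \<Rightarrow> nat) \<Rightarrow> nat set" where
  "jmap f = {n. n \<ge> 1 \<and> f (Suc n) > f n}"

definition almost_subset :: "nat set \<Rightarrow> nat set \<Rightarrow> bool" where
  "almost_subset A B \<longleftrightarrow> finite (A - B)"

definition omega1_order :: "'a rel \<Rightarrow> bool" where
  "omega1_order r \<longleftrightarrow> Well_order r \<and> \<not> countable (Field r)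
     \<and> (\<forall>a\<in>Field r. countable (underS r a))"

end

theory Submission
  imports Defs
begin

text \<open>Recursion along \<open>r\<close> produces sets \<open>A\<^sub>a\<close>, \<open>a \<in> Field r\<close>, forming a \<open>\<subseteq>\<^sup>a\<close>-decreasing chain:
  at stage \<open>a\<close> the countably many earlier sets form a \<open>\<subseteq>\<^sup>a\<close>-chain of infinite sets, so they
  have a common pseudo-intersection, and one thin enough that its counting function stays
  below \<open>g\<^sub>a\<close> is obtained by choosing its \<open>k\<close>-th element beyond the point where \<open>g\<^sub>a\<close>
  exceeds \<open>k\<close>. The counting function \<open>f\<^sub>a\<close> of \<open>A\<^sub>a\<close> lies in \<open>\<I>\<close> and satisfies
  \<open>j(f\<^sub>a) = A\<^sub>a\<close>.\<close>

lemma classI_mono_on: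
  assumes "f \<in> classI"
  shows "mono_on {1..} f"
proof (rule mono_onI)
  fix m n :: nat
  assume "m \<in> {1..}" "m \<le> n"
  from \<open>m \<le> n\<close> show "f m \<le> f n"
  proof (induction n rule: dec_induct)
    case (step k)
    then have "1 \<le> k" using \<open>m \<in> {1..}\<close> by simp
    then have "f k \<le> f (Suc k)" using assms by (simp add: classI_def)
    then show ?case using step.IH by simp
  qed simp
qed

definition counting_fun :: "nat set \<Rightarrow> nat \<Rightarrow> nat" where
  "counting_fun B n = card (B \<inter> {..<n})"

lemma counting_fun_Suc:
  "counting_fun B (Suc n) = counting_fun B n + (if n \<in> B then 1 else 0)"
proof -
  have "B \<inter> {..<Suc n} = (if n \<in> B then insert n (B \<inter> {..<n}) else B \<inter> {..<n})"
    by (auto simp: less_Suc_eq)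
  then show ?thesis unfolding counting_fun_def by auto
qed

lemma counting_fun_tendsto_at_top:
  assumes "infinite B"
  shows "filterlim (counting_fun B) at_top sequentially"
  unfolding filterlim_at_top eventually_sequentially
proof
  fix M :: nat
  obtain C where C: "C \<subseteq> B" "finite C" "card C = M"
    using assms infinite_arbitrarily_large by blast
  obtain N where "\<forall>x\<in>C. x < N"
    using C(2) finite_nat_bounded by blast
  then have "C \<subseteq> B \<inter> {..<n}" if "N \<le> n" for n
    using C(1) that by auto
  then show "\<exists>N. \<forall>n\<ge>N. M \<le> counting_fun B n"
    unfolding counting_fun_def using C by (metis card_mono finite_Int finite_lessThan)
qed

lemma counting_fun_classI:
  assumes "0 \<notin> B" "infinite B"
  shows "counting_fun B \<in> classI"
proof -
  have "counting_fun B 1 = 0"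
    using assms(1) by (simp add: counting_fun_def lessThan_Suc)
  then show ?thesis
    unfolding classI_def using counting_fun_Suc counting_fun_tendsto_at_top[OF assms(2)] by auto
qed

lemma jmap_counting_fun: "jmap (counting_fun B) = B - {0}"
  unfolding jmap_def by (auto simp: counting_fun_Suc)

lemma almost_least_of_almost_chain:
  assumes "finite F" "F \<noteq> {}" "F \<subseteq> S"
    and chain: "\<forall>X\<in>S. \<forall>Y\<in>S. almost_subset X Y \<or> almost_subset Y X"
  shows "\<exists>X\<in>F. almost_subset X (\<Inter>F)"
  using assms(1-3)
proof (induction F rule: finite_ne_induct)
  case (singleton X)
  then show ?case by (simp add: almost_subset_def)
next
  case (insert X F)
  then obtain Y where Y: "Y \<in> F" "finite (Y - \<Inter>F)"
    unfolding almost_subset_def by auto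
  have "almost_subset X Y \<or> almost_subset Y X"
    using chain insert.prems Y(1) by auto
  then show ?case
  proof
    assume "almost_subset X Y"
    moreover have "X - \<Inter>(insert X F) \<subseteq> (X - Y) \<union> (Y - \<Inter>F)" by auto
    ultimately show ?thesis
      using Y(2) unfolding almost_subset_def by (meson finite_UnI finite_subset insertI1)
  next
    assume "almost_subset Y X"
    moreover have "Y - \<Inter>(insert X F) \<subseteq> (Y - X) \<union> (Y - \<Inter>F)" by auto
    ultimately show ?thesis
      using Y unfolding almost_subset_def by (meson finite_UnI finite_subset insertI2)
  qed
qed

lemma infinite_Inter_almost_chain:
  assumes "finite F" "F \<noteq> {}" "F \<subseteq> S" "\<forall>X\<in>S. infinite X"
    and "\<forall>X\<in>S. \<forall>Y\<in>S. almost_subset X Y \<or> almost_subset Y X"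
  shows "infinite (\<Inter>F)"
proof -
  obtain X where "X \<in> F" "finite (X - \<Inter>F)"
    using almost_least_of_almost_chain[OF assms(1,2,3,5)] unfolding almost_subset_def by blast
  moreover have "X \<subseteq> (X - \<Inter>F) \<union> \<Inter>F" by blast
  ultimately show ?thesis
    using assms(3,4) by (meson finite_UnI finite_subset subsetD)
qed

lemma thin_pseudo_intersection_antimono:
  fixes T :: "nat \<Rightarrow> nat set"
  assumes "antimono T" "\<And>k. infinite (T k)"
    and h: "filterlim h at_top sequentially" "mono_on {1..} h"
  shows "\<exists>B. 0 \<notin> B \<and> infinite B \<and> (\<forall>n\<ge>1. counting_fun B n \<le> h n)
           \<and> (\<forall>i. almost_subset B (T i))"
proof -
  have pick: "\<exists>y. y \<in> T k \<and> 0 < y \<and> k < h y \<and> p < y" for k p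
  proof -
    obtain N where N: "\<forall>n\<ge>N. Suc k \<le> h n"
      using h(1) unfolding filterlim_at_top eventually_sequentially by blast
    obtain y where "y \<in> T k" "max N p < y"
      using assms(2) infinite_nat_iff_unbounded by blast
    moreover have "k < h y"
      using N \<open>max N p < y\<close> by (simp add: Suc_le_lessD)
    ultimately show ?thesis by auto
  qed
  have "\<exists>x. \<forall>k. (x k \<in> T k \<and> 0 < x k \<and> k < h (x k)) \<and> x k < x (Suc k)"
    by (rule dependent_nat_choice) (use pick in blast)+
  then obtain x where x: "\<forall>k. (x k \<in> T k \<and> 0 < x k \<and> k < h (x k)) \<and> x k < x (Suc k)"
    by blast
  then have "strict_mono x" by (simp add: strict_mono_Suc_iff)
  define B where "B = range x"
  have "counting_fun B n \<le> h n" if "n \<ge> 1" for n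
  proof -
    have "B \<inter> {..<n} \<subseteq> x ` {..<h n}"
    proof
      fix y assume "y \<in> B \<inter> {..<n}"
      then obtain k where k: "y = x k" "x k < n" unfolding B_def by auto
      have "1 \<le> x k"
        using x by (simp add: Suc_leI)
      then have "h (x k) \<le> h n"
        using mono_onD[OF h(2)] k(2) by simp
      moreover have "k < h (x k)"
        using x by simp
      ultimately have "k < h n"
        by simp
      then show "y \<in> x ` {..<h n}" using k(1) by simp
    qed
    then have "card (B \<inter> {..<n}) \<le> card (x ` {..<h n})"
      by (simp add: card_mono)
    also have "\<dots> \<le> h n"
      using card_image_le[of "{..<h n}" x] by simp
    finally show ?thesis by (simp add: counting_fun_def)
  qed
  moreover have "almost_subset B (T i)" for i
  proof -
    have "B - T i \<subseteq> x ` {..<i}"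
    proof
      fix y assume "y \<in> B - T i"
      then obtain k where k: "y = x k" "x k \<notin> T i" unfolding B_def by auto
      have "\<not> i \<le> k"
      proof
        assume "i \<le> k"
        then have "T k \<subseteq> T i"
          by (rule antimonoD[OF assms(1)])
        moreover have "x k \<in> T k"
          using x by simp
        ultimately show False
          using k(2) by blast
      qed
      then show "y \<in> x ` {..<i}" using k(1) by simp
    qed
    then show ?thesis
      unfolding almost_subset_def by (rule finite_subset) simp
  qed
  moreover have "0 \<notin> B"
    using x unfolding B_def by (metis less_not_refl rangeE)
  moreover have "infinite B"
    using \<open>strict_mono x\<close> unfolding B_def by (simp add: strict_mono_imp_inj_on range_inj_infinite)
  ultimately show ?thesis by blast
qed

lemma thin_pseudo_intersection:
  assumes "countable S" "\<forall>X\<in>S. infinite X"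
    and chain: "\<forall>X\<in>S. \<forall>Y\<in>S. almost_subset X Y \<or> almost_subset Y X"
    and h: "filterlim h at_top sequentially" "mono_on {1..} h"
  shows "\<exists>B. 0 \<notin> B \<and> infinite B \<and> (\<forall>n\<ge>1. counting_fun B n \<le> h n)
           \<and> (\<forall>A\<in>S. almost_subset B A)"
proof -
  define c where "c = from_nat_into (insert UNIV S)"
  have range_c: "range c = insert UNIV S"
    unfolding c_def using assms(1) by (simp add: range_from_nat_into)
  define T where "T k = \<Inter>(c ` {..k})" for k
  have "antimono T"
    unfolding antimono_iff_le_Suc by (auto simp: T_def atMost_Suc)
  moreover have "infinite (T k)" for k
    unfolding T_def
  proof (rule infinite_Inter_almost_chain)
    show "c ` {..k} \<subseteq> insert UNIV S"
      using range_c by blast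
    show "\<forall>X\<in>insert UNIV S. infinite X"
      using assms(2) by simp
    show "\<forall>X\<in>insert UNIV S. \<forall>Y\<in>insert UNIV S. almost_subset X Y \<or> almost_subset Y X"
      using chain by (auto simp: almost_subset_def)
  qed auto
  ultimately have "\<exists>B. 0 \<notin> B \<and> infinite B \<and> (\<forall>n\<ge>1. counting_fun B n \<le> h n)
      \<and> (\<forall>i. almost_subset B (T i))"
    using h by (rule thin_pseudo_intersection_antimono)
  then obtain B where B: "0 \<notin> B" "infinite B" "\<forall>n\<ge>1. counting_fun B n \<le> h n"
      "\<forall>i. almost_subset B (T i)"
    by blast
  have "almost_subset B A" if "A \<in> S" for A
  proof -
    have "A \<in> range c"
      using that range_c by simp
    then obtain i where "c i = A"
      by blast
    moreover have "T i \<subseteq> c i"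
      unfolding T_def by (rule Inter_lower) simp
    ultimately have "B - A \<subseteq> B - T i"
      by blast
    then show ?thesis
      using B(4) unfolding almost_subset_def by (meson finite_subset)
  qed
  then show ?thesis
    using B(1-3) by blast
qed

lemma Well_order_recursive_choice:
  assumes "Well_order r"
    and local: "\<And>A A' a x. \<forall>b\<in>underS r a. A b = A' b \<Longrightarrow> P A a x = P A' a x"
    and step: "\<And>A a. a \<in> Field r \<Longrightarrow> \<forall>b\<in>underS r a. P A b (A b) \<Longrightarrow> \<exists>x. P A a x"
  shows "\<exists>A. \<forall>a\<in>Field r. P A a (A a)"
proof -
  define R where "R = r - Id"
  have "wf R"
    unfolding R_def using assms(1) by (simp add: wo_rel.WF wo_rel_def)
  have R_underS: "(b, a) \<in> R \<longleftrightarrow> b \<in> underS r a" for a b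
    unfolding R_def underS_def by auto
  define A where "A = wfrec R (\<lambda>F a. SOME x. P F a x)"
  have A_eq: "A a = (SOME x. P A a x)" for a
  proof -
    have "P (cut A R a) a = P A a"
      by (intro ext local) (simp add: R_underS cut_apply)
    then show ?thesis
      unfolding A_def by (subst wfrec[OF \<open>wf R\<close>]) simp
  qed
  have "a \<in> Field r \<longrightarrow> P A a (A a)" for a
  proof (induction a rule: wf_induct[OF \<open>wf R\<close>])
    case (1 a)
    have below: "\<forall>b\<in>underS r a. P A b (A b)"
      using 1 by (auto simp: R_underS dest: underS_Field)
    show ?case
    proof
      assume "a \<in> Field r"
      then have "\<exists>x. P A a x"
        using step below by blast
      then show "P A a (A a)"
        unfolding A_eq[of a] by (rule someI_ex)
    qed
  qed
  then show ?thesis by blast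
qed

lemma almost_chain_image_underS:
  assumes "Well_order r" "D \<subseteq> Field r"
    and "\<forall>b\<in>D. \<forall>c\<in>underS r b. almost_subset (A b) (A c)"
  shows "\<forall>X\<in>A ` D. \<forall>Y\<in>A ` D. almost_subset X Y \<or> almost_subset Y X"
proof (intro ballI)
  fix X Y assume "X \<in> A ` D" "Y \<in> A ` D"
  then obtain b c where bc: "b \<in> D" "c \<in> D" "X = A b" "Y = A c" by blast
  then have "b \<in> Field r" "c \<in> Field r"
    using assms(2) by auto
  then have "(b, c) \<in> r \<or> (c, b) \<in> r"
    using assms(1) wo_rel.TOTALS by (auto simp: wo_rel_def)
  then have "b = c \<or> b \<in> underS r c \<or> c \<in> underS r b"
    unfolding underS_def by auto
  then show "almost_subset X Y \<or> almost_subset Y X"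
    using assms(3) bc by (auto simp: almost_subset_def)
qed

definition admissible :: "'a rel \<Rightarrow> (nat \<Rightarrow> nat) \<Rightarrow> ('a \<Rightarrow> nat set) \<Rightarrow> 'a \<Rightarrow> nat set \<Rightarrow> bool" where
  "admissible r h A a B \<longleftrightarrow> 0 \<notin> B \<and> infinite B \<and> (\<forall>n\<ge>1. counting_fun B n \<le> h n)
     \<and> (\<forall>b\<in>underS r a. almost_subset B (A b))"

lemma ex_admissible:
  assumes "Well_order r" "countable (underS r a)" "h \<in> classI"
    and below: "\<forall>b\<in>underS r a. admissible r (g b) A b (A b)"
  shows "\<exists>B. admissible r h A a B"
proof -
  have "\<forall>X\<in>A ` underS r a. infinite X"
    using below by (simp add: admissible_def)
  moreover have "\<forall>X\<in>A ` underS r a. \<forall>Y\<in>A ` underS r a. almost_subset X Y \<or> almost_subset Y X"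
    using below underS_Field[of _ r a]
    by (intro almost_chain_image_underS[OF assms(1)]) (auto simp: admissible_def)
  moreover have "filterlim h at_top sequentially"
    using assms(3) unfolding classI_def by blast
  moreover have "mono_on {1..} h"
    using classI_mono_on[OF assms(3)] .
  ultimately have "\<exists>B. 0 \<notin> B \<and> infinite B \<and> (\<forall>n\<ge>1. counting_fun B n \<le> h n)
      \<and> (\<forall>X\<in>A ` underS r a. almost_subset B X)"
    by (rule thin_pseudo_intersection[OF countable_image[OF assms(2)]])
  then show ?thesis
    unfolding admissible_def by auto
qed

theorem lemma3p5:
  fixes r :: "'a rel" and g :: "'a \<Rightarrow> nat \<Rightarrow> nat"
  assumes "omega1_order r"
    and "\<forall>a\<in>Field r. g a \<in> classI"
  shows "\<exists>f :: 'a \<Rightarrow> nat \<Rightarrow> nat.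
           (\<forall>a\<in>Field r. f a \<in> classI \<and> (\<forall>n\<ge>1. f a n \<le> g a n))
         \<and> (\<forall>a\<in>Field r. \<forall>b\<in>Field r. (a, b) \<in> r \<and> a \<noteq> b
               \<longrightarrow> almost_subset (jmap (f b)) (jmap (f a)))"
proof -
  have wo: "Well_order r" and countable: "\<forall>a\<in>Field r. countable (underS r a)"
    using assms(1) unfolding omega1_order_def by auto
  have "\<exists>A. \<forall>a\<in>Field r. admissible r (g a) A a (A a)"
  proof (rule Well_order_recursive_choice[OF wo, of "\<lambda>A a. admissible r (g a) A a"])
    show "admissible r (g a) A a B = admissible r (g a) A' a B"
      if "\<forall>b\<in>underS r a. A b = A' b" for A A' a B
      using that by (simp add: admissible_def)
    show "\<exists>B. admissible r (g a) A a B"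
      if "a \<in> Field r" "\<forall>b\<in>underS r a. admissible r (g b) A b (A b)" for A a
      using ex_admissible[OF wo] countable assms(2) that by blast
  qed
  then obtain A where A: "\<forall>a\<in>Field r. admissible r (g a) A a (A a)"
    by blast
  show ?thesis
  proof (intro exI[of _ "\<lambda>a. counting_fun (A a)"] conjI ballI impI)
    fix a b assume "a \<in> Field r" "b \<in> Field r" "(a, b) \<in> r \<and> a \<noteq> b"
    then have "almost_subset (A b) (A a)"
      using A unfolding admissible_def underS_def by auto
    then show "almost_subset (jmap (counting_fun (A b))) (jmap (counting_fun (A a)))"
      unfolding jmap_counting_fun almost_subset_def by (rule finite_subset[rotated]) auto
  qed (use A counting_fun_classI in \<open>auto simp: admissible_def\<close>)
qed

end
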